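(* For $x=(a,b,c,d)\in\mathbb{Z}^4$, let $P(x)=b^2c^2+18abcd-4ac^3-4b^3d-27a^2d^2$. Writing $\mathcal{E}=2\mathbb{Z}$ and $\mathcal{O}=2\mathbb{Z}+1$, we have $P(x)\equiv 4\pmod{16}$ if and only if one of the following holds: (1) $a,b,c,d\in\mathcal{O}$ and $a+b+c+d\in2\mathcal{O}$; (2) $b,c\in\mathcal{E}$ and $ad\in2\mathcal{O}$; (3) $a\in2\mathcal{E}$, $b\in2\mathcal{O}$, $c\in\mathcal{O}$; (4) $d\in2\mathcal{E}$, $c\in2\mathcal{O}$, $b\in\mathcal{O}$; (5) $b+c\in\mathcal{O}$ and $a+c,\ b+d\in2\mathcal{E}$.
   Context: Here $2\mathcal{O}=\{2n: n\text{ odd}\}$ and $2\mathcal{E}=4\mathbb{Z}$. *)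

theory Defs
  imports Main
begin

definition P4 :: "int \<Rightarrow> int \<Rightarrow> int \<Rightarrow> int \<Rightarrow> int" where
  "P4 a b c d = b^2*c^2 + 18*a*b*c*d - 4*a*c^3 - 4*b^3*d - 27*a^2*d^2"

definition EvenSet :: "int set" where "EvenSet = {n. even n}"
definition OddSet :: "int set" where "OddSet = {n. odd n}"
definition TwoOdd :: "int set" where "TwoOdd = {2*n | n. odd n}"
definition TwoEven :: "int set" where "TwoEven = {2*n | n. even n}"

end

theory Submission
  imports Defs "HOL-Number_Theory.Cong"
begin

text \<open>
  \<open>P4 a b c d\<close> is the discriminant of the binary cubic \<open>a x\<^sup>3 + b x\<^sup>2 y + c x y\<^sup>2 + d y\<^sup>3\<close>.
  All its partial derivatives have even coefficients, so shifting one variable by 8 changes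
  it by a multiple of 16: the residue of \<open>P4\<close> modulo 16 depends only on the residues of
  \<open>a, b, c, d\<close> modulo 8. The five conditions depend only on the residues modulo 4, so the
  equivalence reduces to a finite check over \<open>{0..7}\<^sup>4\<close>.
\<close>

lemma TwoOdd_iff_mod_4: "x \<in> TwoOdd \<longleftrightarrow> x mod 4 = 2"
proof
  assume "x \<in> TwoOdd"
  then obtain n where "x = 2 * n" "odd n" by (auto simp: TwoOdd_def)
  then show "x mod 4 = 2" by (auto elim!: oddE)
next
  assume "x mod 4 = 2"
  then have "x = 2 * (x div 2)" "odd (x div 2)" by presburger+
  then show "x \<in> TwoOdd" unfolding TwoOdd_def by blast
qed

lemma TwoEven_iff_mod_4: "x \<in> TwoEven \<longleftrightarrow> x mod 4 = 0"
proof
  assume "x \<in> TwoEven"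
  then obtain n where "x = 2 * n" "even n" by (auto simp: TwoEven_def)
  then show "x mod 4 = 0" by (auto elim!: evenE)
next
  assume "x mod 4 = 0"
  then have "x = 2 * (x div 2)" "even (x div 2)" by presburger+
  then show "x \<in> TwoEven" unfolding TwoEven_def by blast
qed

lemma OddSet_iff: "x \<in> OddSet \<longleftrightarrow> odd x"
  by (simp add: OddSet_def)

lemma EvenSet_iff: "x \<in> EvenSet \<longleftrightarrow> even x"
  by (simp add: EvenSet_def)

definition cases_4_mod_16 :: "int \<Rightarrow> int \<Rightarrow> int \<Rightarrow> int \<Rightarrow> bool" where
  "cases_4_mod_16 a b c d \<longleftrightarrow>
     (odd a \<and> odd b \<and> odd c \<and> odd d \<and> (a + b + c + d) mod 4 = 2)
   \<or> (even b \<and> even c \<and> (a * d) mod 4 = 2)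
   \<or> (a mod 4 = 0 \<and> b mod 4 = 2 \<and> odd c)
   \<or> (d mod 4 = 0 \<and> c mod 4 = 2 \<and> odd b)
   \<or> (odd (b + c) \<and> (a + c) mod 4 = 0 \<and> (b + d) mod 4 = 0)"

lemma even_cong_mod_4:
  fixes x y :: int
  assumes "[x = y] (mod 4)"
  shows "even x \<longleftrightarrow> even y"
  using cong_dvd_modulus[OF assms, of 2] by (simp add: cong_def even_iff_mod_2_eq_zero)

lemma cases_4_mod_16_cong:
  assumes a: "[a = a'] (mod 4)" and b: "[b = b'] (mod 4)"
    and c: "[c = c'] (mod 4)" and d: "[d = d'] (mod 4)"
  shows "cases_4_mod_16 a b c d \<longleftrightarrow> cases_4_mod_16 a' b' c' d'"
proof -
  have "[b + c = b' + c'] (mod 4)" "[a + b + c + d = a' + b' + c' + d'] (mod 4)"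
    "[a * d = a' * d'] (mod 4)" "[a + c = a' + c'] (mod 4)" "[b + d = b' + d'] (mod 4)"
    using a b c d by (auto intro!: cong_add cong_mult)
  note congs = a b c d this
  show ?thesis
    unfolding cases_4_mod_16_def
    by (simp only: congs[THEN even_cong_mod_4] congs[unfolded cong_def])
qed

lemma P4_shift_a_cong: "[P4 a b c d = P4 (a + 8 * k) b c d] (mod 16)"
  unfolding cong_iff_lin
  by (rule exI[of _ "9*k*b*c*d - 2*k*c^3 - 27*(a*k + 4*k^2)*d^2"])
    (simp add: P4_def power2_eq_square power3_eq_cube algebra_simps)

lemma P4_shift_b_cong: "[P4 a b c d = P4 a (b + 8 * k) c d] (mod 16)"
  unfolding cong_iff_lin
  by (rule exI[of _ "(b*k + 4*k^2)*c^2 + 9*a*k*c*d - 2*(3*b^2*k + 24*b*k^2 + 64*k^3)*d"])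
    (simp add: P4_def power2_eq_square power3_eq_cube algebra_simps)

lemma P4_shift_c_cong: "[P4 a b c d = P4 a b (c + 8 * k) d] (mod 16)"
  unfolding cong_iff_lin
  by (rule exI[of _ "(c*k + 4*k^2)*b^2 + 9*a*b*k*d - 2*a*(3*c^2*k + 24*c*k^2 + 64*k^3)"])
    (simp add: P4_def power2_eq_square power3_eq_cube algebra_simps)

lemma P4_shift_d_cong: "[P4 a b c d = P4 a b c (d + 8 * k)] (mod 16)"
  unfolding cong_iff_lin
  by (rule exI[of _ "9*a*b*c*k - 2*b^3*k - 27*(d*k + 4*k^2)*a^2"])
    (simp add: P4_def power2_eq_square power3_eq_cube algebra_simps)

lemma P4_cong:
  assumes "[a = a'] (mod 8)" "[b = b'] (mod 8)" "[c = c'] (mod 8)" "[d = d'] (mod 8)"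
  shows "[P4 a b c d = P4 a' b' c' d'] (mod 16)"
proof -
  obtain i j k l where "a' = a + 8 * i" "b' = b + 8 * j" "c' = c + 8 * k" "d' = d + 8 * l"
    using assms by (auto simp: cong_iff_lin)
  then have "[P4 a b c d = P4 a' b c d] (mod 16)" "[P4 a' b c d = P4 a' b' c d] (mod 16)"
    "[P4 a' b' c d = P4 a' b' c' d] (mod 16)" "[P4 a' b' c' d = P4 a' b' c' d'] (mod 16)"
    by (simp_all only: P4_shift_a_cong P4_shift_b_cong P4_shift_c_cong P4_shift_d_cong)
  then show ?thesis by (blast intro: cong_trans)
qed

lemma P4_4_mod_16_iff_cases_on_residues:
  "\<forall>a\<in>set [0..7]. \<forall>b\<in>set [0..7]. \<forall>c\<in>set [0..7]. \<forall>d\<in>set [0..7].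
     P4 a b c d mod 16 = 4 \<longleftrightarrow> cases_4_mod_16 a b c d"
  unfolding cases_4_mod_16_def P4_def by code_simp

lemma P4_4_mod_16_iff_cases: "P4 a b c d mod 16 = 4 \<longleftrightarrow> cases_4_mod_16 a b c d"
proof -
  have mod_8: "[x = x mod 8] (mod 8)" for x :: int
    by simp
  then have mod_4: "[x = x mod 8] (mod 4)" for x :: int
    by (rule cong_dvd_modulus) simp
  have residue: "x mod 8 \<in> set [0..7]" for x :: int
    by (simp add: set_upto)
  have "P4 a b c d mod 16 = P4 (a mod 8) (b mod 8) (c mod 8) (d mod 8) mod 16"
    using P4_cong[OF mod_8 mod_8 mod_8 mod_8] by (simp add: cong_def)
  moreover have "cases_4_mod_16 a b c d \<longleftrightarrow>
      cases_4_mod_16 (a mod 8) (b mod 8) (c mod 8) (d mod 8)"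
    by (rule cases_4_mod_16_cong[OF mod_4 mod_4 mod_4 mod_4])
  ultimately show ?thesis
    using P4_4_mod_16_iff_cases_on_residues residue by simp
qed

theorem lemma2p5:
  fixes a b c d :: int
  shows "P4 a b c d mod 16 = 4 \<longleftrightarrow>
    ((a \<in> OddSet \<and> b \<in> OddSet \<and> c \<in> OddSet \<and> d \<in> OddSet \<and> a + b + c + d \<in> TwoOdd)
     \<or> (b \<in> EvenSet \<and> c \<in> EvenSet \<and> a * d \<in> TwoOdd)
     \<or> (a \<in> TwoEven \<and> b \<in> TwoOdd \<and> c \<in> OddSet)
     \<or> (d \<in> TwoEven \<and> c \<in> TwoOdd \<and> b \<in> OddSet)
     \<or> (b + c \<in> OddSet \<and> a + c \<in> TwoEven \<and> b + d \<in> TwoEven))"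
  unfolding P4_4_mod_16_iff_cases cases_4_mod_16_def
  by (simp only: TwoOdd_iff_mod_4 TwoEven_iff_mod_4 OddSet_iff EvenSet_iff)

end
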